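(* Consider FULLSET MALIQUOT. Then $\mathcal{SG}(n)\in\{0,1\}$, and $\mathcal{SG}(n)=1$ if and only if $n>1$ is square-free.
   Context: FULLSET MALIQUOT is the impartial normal-play game on positive integers where the single option from a heap $n>1$ is the disjunctive sum of all proper divisors of $n$ (all $d\mid n$ with $1\le d<n$); a heap of size $1$ is terminal. $\mathcal{SG}$ denotes the Sprague-Grundy value (mex rule, nim-sum). *)

theory Defs
  imports "HOL-Computational_Algebra.Squarefree"
begin

definition mex :: "nat set \<Rightarrow> nat" where
  "mex S = (LEAST k. k \<notin> S)"

definition nim_sum :: "nat list \<Rightarrow> nat" where
  "nim_sum xs = foldr (\<lambda>x acc. xor x acc) xs 0"

text \<open>A heap n > 1 has exactly one option, the
  disjunctive sum of all proper divisors d of n (1 \<le> d < n), whose Grundy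
  value is the nim-sum of the values of the summands. The value at 0 is an
  irrelevant default (0 is not a position).\<close>
function sg :: "nat \<Rightarrow> nat" where
  "sg n = (if n = 0 then 0
           else if n = 1 then mex {}
           else mex {nim_sum (map sg (filter (\<lambda>d. d dvd n) [1..<n]))})"
  by auto
termination
  by (relation "measure id") auto

end

theory Submission
  imports Defs
begin

(* By induction every value is 0 or 1, and the proper divisors d > 1 of value 1 are exactly
   the squarefree ones, so the single option of n has value the parity of the number of
   squarefree divisors of n other than 1 and n.  Fixing a prime p dividing n, the squarefree
   divisors of n are paired off by d <-> p d, so their total number is even; removing 1, and
   also n when n is squarefree, leaves an odd number exactly when n is not squarefree.  Since
   mex {v} = 1 iff v = 0, sg n = 1 exactly when n > 1 is squarefree. *)

declare sg.simps [simp del]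

lemma sg_1: "sg 1 = 0"
  by (simp add: sg.simps mex_def)

lemma sg_gt_1: "1 < n \<Longrightarrow> sg n = mex {nim_sum (map sg (filter (\<lambda>d. d dvd n) [1..<n]))}"
  by (subst sg.simps) simp

lemma mex_singleton: "mex {x} = (if x = 0 then 1 else 0)"
  unfolding mex_def by (rule Least_equality) auto

lemma nim_sum_map_01:
  assumes "distinct xs" and "\<And>x. x \<in> set xs \<Longrightarrow> f x \<in> {0, 1}"
  shows "nim_sum (map f xs) = card {x \<in> set xs. f x = 1} mod 2"
  using assms
proof (induction xs)
  case Nil
  then show ?case by (simp add: nim_sum_def)
next
  case (Cons a xs)
  define c where "c = card {x \<in> set xs. f x = 1}"
  have IH: "nim_sum (map f xs) = c mod 2"
    using Cons unfolding c_def by simp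
  have step: "nim_sum (map f (a # xs)) = xor (f a) (c mod 2)"
    using IH by (simp add: nim_sum_def)
  consider "f a = 0" | "f a = 1" using Cons.prems(2)[of a] by auto
  then show ?case
  proof cases
    case 1
    then have "{x \<in> set (a # xs). f x = 1} = {x \<in> set xs. f x = 1}" by auto
    then show ?thesis using step 1 by (simp add: c_def)
  next
    case 2
    then have "{x \<in> set (a # xs). f x = 1} = insert a {x \<in> set xs. f x = 1}" by auto
    moreover have "a \<notin> set xs" using Cons.prems(1) by simp
    ultimately have "card {x \<in> set (a # xs). f x = 1} = Suc c" by (simp add: c_def)
    moreover have "xor 1 (c mod 2) = Suc c mod 2" by (cases "even c") (auto simp: mod_Suc)
    ultimately show ?thesis using step 2 by simp
  qed
qed

lemma even_card_squarefree_divisors: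
  fixes n :: nat
  assumes "1 < n"
  shows "even (card {d. d dvd n \<and> squarefree d})"
proof -
  obtain p where p: "prime p" "p dvd n"
    using assms prime_factor_nat by (metis less_irrefl)
  define S1 where "S1 = {d. d dvd n \<and> squarefree d \<and> \<not> p dvd d}"
  define S2 where "S2 = {d. d dvd n \<and> squarefree d \<and> p dvd d}"
  have "finite S1" "finite S2"
    using assms unfolding S1_def S2_def by (auto intro: finite_subset[OF _ finite_divisors_nat])
  moreover have "{d. d dvd n \<and> squarefree d} = S1 \<union> S2" "S1 \<inter> S2 = {}"
    unfolding S1_def S2_def by auto
  moreover have "bij_betw ((*) p) S1 S2"
  proof (rule bij_betw_byWitness[where f' = "\<lambda>d. d div p"])
    show "\<forall>d \<in> S1. p * d div p = d" and "\<forall>d \<in> S2. p * (d div p) = d"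
      using p(1) prime_gt_0_nat unfolding S2_def by auto
    show "(*) p ` S1 \<subseteq> S2"
    proof
      fix e assume "e \<in> (*) p ` S1"
      then obtain d where e: "e = p * d" and d: "d dvd n" "squarefree d" "\<not> p dvd d"
        unfolding S1_def by auto
      have cop: "coprime p d" using p(1) d(3) by (simp add: prime_imp_coprime)
      have "p * d dvd n" using cop p(2) d(1) by (simp add: divides_mult)
      moreover have "squarefree (p * d)"
        using squarefree_mult_coprime[OF cop] p(1) d(2) squarefree_prime by blast
      ultimately show "e \<in> S2" unfolding S2_def e by simp
    qed
    show "(\<lambda>d. d div p) ` S2 \<subseteq> S1"
    proof
      fix e assume "e \<in> (\<lambda>d. d div p) ` S2"
      then obtain d where d: "d dvd n" "squarefree d" "p dvd d" and e: "e = d div p"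
        unfolding S2_def by auto
      then have de: "d = p * e" by simp
      have "\<not> p dvd e"
      proof
        assume "p dvd e"
        then have "p ^ 2 dvd d" using de by (simp add: power2_eq_square)
        then have "p dvd 1" using d(2) squarefreeD by blast
        then show False using p(1) by simp
      qed
      moreover have "e dvd n" using de d(1) dvd_mult_right by blast
      moreover have "squarefree e" using de d(2) squarefree_mono dvd_triv_right by metis
      ultimately show "e \<in> S1" unfolding S1_def by simp
    qed
  qed
  then have "card S1 = card S2" by (rule bij_betw_same_card)
  ultimately show ?thesis by (simp add: card_Un_disjoint)
qed

lemma odd_card_proper_squarefree_divisors_iff:
  fixes n :: nat
  assumes "1 < n"
  shows "odd (card {d. 1 < d \<and> d < n \<and> d dvd n \<and> squarefree d}) \<longleftrightarrow> \<not> squarefree n"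
proof -
  define S where "S = {d. d dvd n \<and> squarefree d}"
  define k where "k = card (S \<inter> {1, n})"
  have fin: "finite S"
    using assms unfolding S_def by (auto intro: finite_subset[OF _ finite_divisors_nat])
  have "{d. 1 < d \<and> d < n \<and> d dvd n \<and> squarefree d} = S - {1, n}"
    using assms unfolding S_def by (auto dest: dvd_imp_le intro: Nat.gr0I)
  then have card_eq: "card {d. 1 < d \<and> d < n \<and> d dvd n \<and> squarefree d} = card S - k"
    using fin unfolding k_def by (simp add: card_Diff_subset_Int)
  have "S \<inter> {1, n} = (if squarefree n then {1, n} else {1})"
    unfolding S_def by auto
  then have k: "k = (if squarefree n then 2 else 1)"
    using assms unfolding k_def by simp
  have "k \<le> card S"
    using fin unfolding k_def by (simp add: card_mono)
  moreover have "even (card S)"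
    unfolding S_def using assms by (rule even_card_squarefree_divisors)
  ultimately show ?thesis
    unfolding card_eq k by auto
qed

lemma sg_eq_from_proper_divisors:
  assumes "1 < n"
    and IH: "\<And>d. 1 \<le> d \<Longrightarrow> d < n \<Longrightarrow> d dvd n \<Longrightarrow> sg d = (if 1 < d \<and> squarefree d then 1 else 0)"
  shows "sg n = (if squarefree n then 1 else 0)"
proof -
  define L where "L = filter (\<lambda>d. d dvd n) [1..<n]"
  have set_L: "set L = {d. 1 \<le> d \<and> d < n \<and> d dvd n}"
    unfolding L_def by auto
  have sg_L: "sg d = (if 1 < d \<and> squarefree d then 1 else 0)" if "d \<in> set L" for d
    using IH that unfolding set_L by simp
  have sg_L_eq_1: "sg d = 1 \<longleftrightarrow> 1 < d \<and> squarefree d" if "d \<in> set L" for d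
    using sg_L[OF that] by simp
  have "nim_sum (map sg L) = card {d \<in> set L. sg d = 1} mod 2"
    by (rule nim_sum_map_01) (simp_all add: L_def sg_L)
  also have "{d \<in> set L. sg d = 1} = {d. 1 < d \<and> d < n \<and> d dvd n \<and> squarefree d}"
    using sg_L_eq_1 unfolding set_L by auto
  also have "card \<dots> mod 2 = (if squarefree n then 0 else 1)"
    using odd_card_proper_squarefree_divisors_iff[OF assms(1)] by (simp add: mod2_eq_if)
  finally show ?thesis
    unfolding sg_gt_1[OF assms(1)] L_def[symmetric] by (simp add: mex_singleton)
qed

lemma sg_eq_if_squarefree: "1 \<le> n \<Longrightarrow> sg n = (if 1 < n \<and> squarefree n then 1 else 0)"
proof (induction n rule: less_induct)
  case (less n)
  consider "n = 1" | "1 < n" using less.prems by linarith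
  then show ?case
  proof cases
    case 1
    then show ?thesis unfolding \<open>n = 1\<close> sg_1 by simp
  next
    case 2
    have "sg n = (if squarefree n then 1 else 0)"
      using 2 by (rule sg_eq_from_proper_divisors) (simp add: less.IH)
    then show ?thesis using 2 by simp
  qed
qed

theorem mainTheorem14:
  fixes n :: nat
  assumes "n \<ge> 1"
  shows "sg n \<in> {0, 1} \<and> (sg n = 1 \<longleftrightarrow> n > 1 \<and> squarefree n)"
  using sg_eq_if_squarefree[OF assms] by simp

end
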